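(* Let $P$ be an ergodic transition matrix on a finite set $\mathcal{X}$ with stationary distribution $\pi$. For all integers $r,s\ge 1$, $$\big\|(P^\star-\Pi)^{r+s}(P-\Pi)^{r+s}\big\|_\pi\le \big\|(P^\star-\Pi)^{r}(P-\Pi)^{r}\big\|_\pi\,\big\|(P^\star-\Pi)^{s}(P-\Pi)^{s}\big\|_\pi .$$
   Context: $P$ is row-stochastic on finite $\mathcal{X}$, ergodic (primitive), with unique stationary distribution $\pi>0$. $\ell_2(\pi)$ is $\mathbb{R}^{\mathcal{X}}$ with $\langle f,g\rangle_\pi=\sum_x f(x)g(x)\pi(x)$; matrices act on functions by $f\mapsto Af$ and $\|A\|_\pi=\sup_{\|f\|_\pi=1}\|Af\|_\pi$. $P^\star(x,x')=\pi(x')P(x',x)/\pi(x)$ is the adjoint of $P$ in $\ell_2(\pi)$, and $\Pi=\mathbf{1}^\intercal\pi$ (all rows equal $\pi$). *)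

theory Defs
  imports "HOL-Analysis.Analysis"
begin

text \<open>Matrices on a finite state space 'x are elements of real^'x^'x; they act on
functions f :: real^'x (column vectors) by f \<mapsto> A *v f.\<close>

primrec matpow :: "real^'n^'n \<Rightarrow> nat \<Rightarrow> real^'n^'n" where
  "matpow A 0 = mat 1"
| "matpow A (Suc k) = A ** matpow A k"

definition row_stochastic :: "real^'x^'x \<Rightarrow> bool" where
  "row_stochastic P \<longleftrightarrow> (\<forall>x y. P $ x $ y \<ge> 0) \<and> (\<forall>x. (\<Sum>y\<in>UNIV. P $ x $ y) = 1)"

text \<open>Ergodic = primitive: some power has all entries strictly positive.\<close>
definition primitive :: "real^'x^'x \<Rightarrow> bool" where
  "primitive P \<longleftrightarrow> (\<exists>k. \<forall>x y. matpow P k $ x $ y > 0)"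

definition stationary_dist :: "real^'x^'x \<Rightarrow> real^'x \<Rightarrow> bool" where
  "stationary_dist P \<pi> \<longleftrightarrow> (\<forall>x. \<pi> $ x \<ge> 0) \<and> (\<Sum>x\<in>UNIV. \<pi> $ x) = 1 \<and> \<pi> v* P = \<pi>"

definition pi_norm :: "real^'x \<Rightarrow> real^'x \<Rightarrow> real" where
  "pi_norm \<pi> f = sqrt (\<Sum>x\<in>UNIV. (f $ x)^2 * \<pi> $ x)"

definition op_norm_pi :: "real^'x \<Rightarrow> real^'x^'x \<Rightarrow> real" where
  "op_norm_pi \<pi> A = Sup {pi_norm \<pi> (A *v f) | f. pi_norm \<pi> f = 1}"

definition adjoint_pi :: "real^'x \<Rightarrow> real^'x^'x \<Rightarrow> real^'x^'x" where
  "adjoint_pi \<pi> P = (\<chi> x x'. \<pi> $ x' * P $ x' $ x / \<pi> $ x)"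

definition Pi_mat :: "real^'x \<Rightarrow> real^'x^'x" where
  "Pi_mat \<pi> = (\<chi> x x'. \<pi> $ x')"

end

theory Submission imports Defs begin

text \<open>Conjugating by the diagonal matrix with entries \<open>sqrt (\<pi> x)\<close> makes \<open>\<ell>\<^sub>2(\<pi>)\<close> isometric
to Euclidean space, so \<open>\<ell>\<^sub>2(\<pi>)\<close> is a Hilbert space and \<open>adjoint_pi \<pi>\<close> is its adjoint.
There the C*-identity \<open>\<parallel>B\<^sup>\<star> B\<parallel> = \<parallel>B\<parallel>\<^sup>2\<close> holds, and with \<open>B = P - \<Pi>\<close>, whose adjoint is
\<open>P\<^sup>\<star> - \<Pi>\<close>, the claim reads \<open>\<parallel>B\<^bsup>r+s\<^esup>\<parallel>\<^sup>2 \<le> \<parallel>B\<^sup>r\<parallel>\<^sup>2 \<parallel>B\<^sup>s\<parallel>\<^sup>2\<close>, which is submultiplicativity.\<close>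

definition pi_inner :: "real^'x \<Rightarrow> real^'x \<Rightarrow> real^'x \<Rightarrow> real" where
  "pi_inner \<pi> f g = (\<Sum>x\<in>UNIV. f$x * g$x * \<pi>$x)"

definition sqrt_weight :: "real^'x \<Rightarrow> real^'x \<Rightarrow> real^'x" where
  "sqrt_weight \<pi> f = (\<chi> x. sqrt (\<pi>$x) * f$x)"

definition sqrt_weight_inv :: "real^'x \<Rightarrow> real^'x \<Rightarrow> real^'x" where
  "sqrt_weight_inv \<pi> g = (\<chi> x. g$x / sqrt (\<pi>$x))"

lemma pi_inner_commute: "pi_inner \<pi> f g = pi_inner \<pi> g f"
  unfolding pi_inner_def by (simp add: mult.commute mult.left_commute)

lemma matpow_commute: "matpow A n ** A = A ** matpow A n"
  by (induction n) (simp_all add: matrix_mul_assoc[symmetric])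

lemma matpow_add: "matpow A (m + n) = matpow A m ** matpow A n"
  by (induction m) (simp_all add: matrix_mul_assoc)

locale positive_weights =
  fixes \<pi> :: "real^'x"
  assumes pos: "\<pi> $ x > 0"
begin

lemma weight_nonzero: "\<pi> $ x \<noteq> 0"
  using pos[of x] by simp

lemma pi_inner_eq_inner: "pi_inner \<pi> f g = inner (sqrt_weight \<pi> f) (sqrt_weight \<pi> g)"
  unfolding pi_inner_def inner_vec_def sqrt_weight_def
  by (rule sum.cong) (use pos in \<open>auto simp: algebra_simps less_imp_le\<close>)

lemma pi_norm_eq_norm: "pi_norm \<pi> f = norm (sqrt_weight \<pi> f)"
proof -
  have "pi_norm \<pi> f = sqrt (pi_inner \<pi> f f)"
    unfolding pi_norm_def pi_inner_def by (simp add: power2_eq_square)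
  then show ?thesis by (simp add: pi_inner_eq_inner norm_eq_sqrt_inner)
qed

lemma pi_inner_self: "pi_inner \<pi> f f = (pi_norm \<pi> f)^2"
  by (simp add: pi_inner_eq_inner pi_norm_eq_norm power2_norm_eq_inner)

lemma pi_inner_le: "pi_inner \<pi> f g \<le> pi_norm \<pi> f * pi_norm \<pi> g"
  by (simp add: pi_inner_eq_inner pi_norm_eq_norm norm_cauchy_schwarz)

lemma pi_norm_nonneg: "pi_norm \<pi> f \<ge> 0"
  by (simp add: pi_norm_eq_norm)

lemma pi_norm_eq_zero_iff: "pi_norm \<pi> f = 0 \<longleftrightarrow> f = 0"
  by (simp add: pi_norm_eq_norm sqrt_weight_def vec_eq_iff weight_nonzero)

lemma pi_norm_scaleR: "pi_norm \<pi> (c *\<^sub>R f) = \<bar>c\<bar> * pi_norm \<pi> f"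
proof -
  have "sqrt_weight \<pi> (c *\<^sub>R f) = c *\<^sub>R sqrt_weight \<pi> f"
    by (simp add: sqrt_weight_def vec_eq_iff algebra_simps)
  then show ?thesis by (simp add: pi_norm_eq_norm)
qed

lemma ex_pi_norm_eq_1: "\<exists>f. pi_norm \<pi> f = 1"
proof -
  have "(1::real^'x) \<noteq> 0" by (simp add: vec_eq_iff)
  then have "pi_norm \<pi> 1 > 0"
    using pi_norm_nonneg pi_norm_eq_zero_iff by (metis order_le_less)
  then have "pi_norm \<pi> ((1 / pi_norm \<pi> 1) *\<^sub>R 1) = 1" by (simp add: pi_norm_scaleR)
  then show ?thesis ..
qed

lemma pi_norm_matrix_bounded: "\<exists>C. \<forall>f. pi_norm \<pi> (A *v f) \<le> C * pi_norm \<pi> f"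
proof -
  define h where "h = (\<lambda>g. sqrt_weight \<pi> (A *v sqrt_weight_inv \<pi> g))"
  have "linear h"
    by (rule linearI) (simp_all add: h_def sqrt_weight_def sqrt_weight_inv_def vec_eq_iff
        algebra_simps add_divide_distrib matrix_vector_mult_def sum.distrib sum_distrib_left)
  then obtain K where K: "\<And>g. norm (h g) \<le> norm g * K"
    using bounded_linear.bounded linear_conv_bounded_linear by blast
  have "sqrt_weight_inv \<pi> (sqrt_weight \<pi> f) = f" for f
    using pos by (simp add: sqrt_weight_def sqrt_weight_inv_def vec_eq_iff) (metis less_irrefl)
  then have "pi_norm \<pi> (A *v f) = norm (h (sqrt_weight \<pi> f))" for f
    by (simp add: h_def pi_norm_eq_norm)
  then have "pi_norm \<pi> (A *v f) \<le> K * pi_norm \<pi> f" for f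
    using K[of "sqrt_weight \<pi> f"] by (simp add: pi_norm_eq_norm mult.commute)
  then show ?thesis by blast
qed

lemma pi_norm_le_op_norm_pi: "pi_norm \<pi> (A *v f) \<le> op_norm_pi \<pi> A * pi_norm \<pi> f"
  and op_norm_pi_nonneg: "op_norm_pi \<pi> A \<ge> 0"
proof -
  let ?S = "{pi_norm \<pi> (A *v f) | f. pi_norm \<pi> f = 1}"
  obtain C where C: "\<And>f. pi_norm \<pi> (A *v f) \<le> C * pi_norm \<pi> f"
    using pi_norm_matrix_bounded by blast
  have "bdd_above ?S"
  proof (rule bdd_aboveI)
    fix y assume "y \<in> ?S"
    then obtain f where "y = pi_norm \<pi> (A *v f)" "pi_norm \<pi> f = 1" by blast
    then show "y \<le> C" using C[of f] by simp
  qed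
  then have unit: "pi_norm \<pi> (A *v g) \<le> op_norm_pi \<pi> A" if "pi_norm \<pi> g = 1" for g
    unfolding op_norm_pi_def using that by (intro cSup_upper) blast+
  show "op_norm_pi \<pi> A \<ge> 0"
    using ex_pi_norm_eq_1 unit pi_norm_nonneg order_trans by metis
  show "pi_norm \<pi> (A *v f) \<le> op_norm_pi \<pi> A * pi_norm \<pi> f"
  proof (cases "f = 0")
    case False
    then have n: "pi_norm \<pi> f > 0"
      using pi_norm_nonneg pi_norm_eq_zero_iff by (metis order_le_less)
    have "pi_norm \<pi> (A *v ((1 / pi_norm \<pi> f) *\<^sub>R f)) \<le> op_norm_pi \<pi> A"
      using n by (intro unit) (simp add: pi_norm_scaleR)
    then show ?thesis
      using n by (simp add: matrix_vector_mult_scaleR pi_norm_scaleR divide_le_eq mult.commute)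
  qed (simp add: pi_norm_def)
qed

lemma op_norm_pi_least:
  assumes "\<And>f. pi_norm \<pi> (A *v f) \<le> C * pi_norm \<pi> f"
  shows "op_norm_pi \<pi> A \<le> C"
  unfolding op_norm_pi_def
proof (rule cSup_least)
  show "{pi_norm \<pi> (A *v f) | f. pi_norm \<pi> f = 1} \<noteq> {}"
    using ex_pi_norm_eq_1 by blast
next
  fix y assume "y \<in> {pi_norm \<pi> (A *v f) | f. pi_norm \<pi> f = 1}"
  then obtain f where "y = pi_norm \<pi> (A *v f)" "pi_norm \<pi> f = 1" by blast
  then show "y \<le> C" using assms[of f] by simp
qed

lemma op_norm_pi_mult: "op_norm_pi \<pi> (A ** B) \<le> op_norm_pi \<pi> A * op_norm_pi \<pi> B"
proof (rule op_norm_pi_least)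
  fix f
  have "pi_norm \<pi> ((A ** B) *v f) = pi_norm \<pi> (A *v (B *v f))"
    by (simp add: matrix_vector_mul_assoc)
  also have "\<dots> \<le> op_norm_pi \<pi> A * pi_norm \<pi> (B *v f)"
    by (rule pi_norm_le_op_norm_pi)
  also have "\<dots> \<le> op_norm_pi \<pi> A * (op_norm_pi \<pi> B * pi_norm \<pi> f)"
    by (intro mult_left_mono pi_norm_le_op_norm_pi op_norm_pi_nonneg)
  finally show "pi_norm \<pi> ((A ** B) *v f) \<le> op_norm_pi \<pi> A * op_norm_pi \<pi> B * pi_norm \<pi> f"
    by (simp add: mult.assoc)
qed

lemma op_norm_pi_matpow_add:
  "op_norm_pi \<pi> (matpow A (m + n)) \<le> op_norm_pi \<pi> (matpow A m) * op_norm_pi \<pi> (matpow A n)"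
  unfolding matpow_add by (rule op_norm_pi_mult)

lemma pi_inner_adjoint_pi: "pi_inner \<pi> (A *v f) g = pi_inner \<pi> f (adjoint_pi \<pi> A *v g)"
proof -
  have "pi_inner \<pi> (A *v f) g = (\<Sum>x\<in>UNIV. \<Sum>y\<in>UNIV. A$x$y * f$y * g$x * \<pi>$x)"
    by (simp add: pi_inner_def matrix_vector_mult_def sum_distrib_right)
  also have "\<dots> = (\<Sum>y\<in>UNIV. \<Sum>x\<in>UNIV. A$x$y * f$y * g$x * \<pi>$x)"
    by (rule sum.swap)
  also have "\<dots> = pi_inner \<pi> f (adjoint_pi \<pi> A *v g)"
    unfolding pi_inner_def matrix_vector_mult_def adjoint_pi_def
    by (simp add: sum_distrib_left sum_distrib_right weight_nonzero field_simps)
  finally show ?thesis .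
qed

lemma adjoint_pi_diff: "adjoint_pi \<pi> (A - B) = adjoint_pi \<pi> A - adjoint_pi \<pi> B"
  by (simp add: vec_eq_iff adjoint_pi_def diff_divide_distrib algebra_simps)

lemma adjoint_pi_Pi_mat: "adjoint_pi \<pi> (Pi_mat \<pi>) = Pi_mat \<pi>"
  by (simp add: vec_eq_iff adjoint_pi_def Pi_mat_def weight_nonzero)

lemma adjoint_pi_mult: "adjoint_pi \<pi> (A ** B) = adjoint_pi \<pi> B ** adjoint_pi \<pi> A"
  by (simp add: vec_eq_iff adjoint_pi_def matrix_matrix_mult_def sum_divide_distrib
      sum_distrib_left weight_nonzero field_simps)

lemma adjoint_pi_matpow: "adjoint_pi \<pi> (matpow A n) = matpow (adjoint_pi \<pi> A) n"
proof (induction n)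
  case 0
  show ?case by (simp add: vec_eq_iff adjoint_pi_def mat_def weight_nonzero)
next
  case (Suc n)
  then show ?case by (simp add: adjoint_pi_mult matpow_commute)
qed

lemma op_norm_pi_adjoint_le: "op_norm_pi \<pi> (adjoint_pi \<pi> B) \<le> op_norm_pi \<pi> B"
proof (rule op_norm_pi_least)
  fix g
  let ?h = "adjoint_pi \<pi> B *v g"
  have "(pi_norm \<pi> ?h)^2 = pi_inner \<pi> (B *v ?h) g"
    using pi_inner_adjoint_pi[of B ?h g] by (simp add: pi_inner_self[symmetric] pi_inner_commute)
  also have "\<dots> \<le> pi_norm \<pi> (B *v ?h) * pi_norm \<pi> g"
    by (rule pi_inner_le)
  also have "\<dots> \<le> op_norm_pi \<pi> B * pi_norm \<pi> ?h * pi_norm \<pi> g"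
    by (intro mult_right_mono pi_norm_le_op_norm_pi pi_norm_nonneg)
  finally have "pi_norm \<pi> ?h * pi_norm \<pi> ?h \<le> op_norm_pi \<pi> B * pi_norm \<pi> g * pi_norm \<pi> ?h"
    by (simp add: power2_eq_square mult_ac)
  then show "pi_norm \<pi> ?h \<le> op_norm_pi \<pi> B * pi_norm \<pi> g"
    using pi_norm_nonneg[of ?h] op_norm_pi_nonneg[of B] pi_norm_nonneg[of g]
    by (cases "pi_norm \<pi> ?h = 0") simp_all
qed

lemma op_norm_pi_sq_le_adjoint_mult: "(op_norm_pi \<pi> B)^2 \<le> op_norm_pi \<pi> (adjoint_pi \<pi> B ** B)"
proof -
  let ?C = "op_norm_pi \<pi> (adjoint_pi \<pi> B ** B)"
  have "op_norm_pi \<pi> B \<le> sqrt ?C"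
  proof (rule op_norm_pi_least)
    fix f
    have "(pi_norm \<pi> (B *v f))^2 = pi_inner \<pi> f ((adjoint_pi \<pi> B ** B) *v f)"
      by (simp add: pi_inner_self[symmetric] pi_inner_adjoint_pi matrix_vector_mul_assoc)
    also have "\<dots> \<le> pi_norm \<pi> f * pi_norm \<pi> ((adjoint_pi \<pi> B ** B) *v f)"
      by (rule pi_inner_le)
    also have "\<dots> \<le> pi_norm \<pi> f * (?C * pi_norm \<pi> f)"
      by (intro mult_left_mono pi_norm_le_op_norm_pi pi_norm_nonneg)
    also have "\<dots> = (sqrt ?C * pi_norm \<pi> f)^2"
      by (simp add: op_norm_pi_nonneg power_mult_distrib power2_eq_square)
    finally show "pi_norm \<pi> (B *v f) \<le> sqrt ?C * pi_norm \<pi> f"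
      by (rule power2_le_imp_le) (simp add: op_norm_pi_nonneg pi_norm_nonneg)
  qed
  then have "(op_norm_pi \<pi> B)^2 \<le> (sqrt ?C)^2"
    by (intro power_mono op_norm_pi_nonneg)
  then show ?thesis by (simp add: op_norm_pi_nonneg)
qed

lemma op_norm_pi_adjoint_mult_self: "op_norm_pi \<pi> (adjoint_pi \<pi> B ** B) = (op_norm_pi \<pi> B)^2"
proof (rule antisym)
  have "op_norm_pi \<pi> (adjoint_pi \<pi> B ** B) \<le> op_norm_pi \<pi> (adjoint_pi \<pi> B) * op_norm_pi \<pi> B"
    by (rule op_norm_pi_mult)
  also have "\<dots> \<le> op_norm_pi \<pi> B * op_norm_pi \<pi> B"
    by (intro mult_right_mono op_norm_pi_adjoint_le op_norm_pi_nonneg)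
  finally show "op_norm_pi \<pi> (adjoint_pi \<pi> B ** B) \<le> (op_norm_pi \<pi> B)^2"
    by (simp add: power2_eq_square)
qed (rule op_norm_pi_sq_le_adjoint_mult)

end

theorem mainTheorem3:
  fixes P :: "real^'x^'x" and \<pi> :: "real^'x" and r s :: nat
  assumes "row_stochastic P" and "primitive P"
    and "stationary_dist P \<pi>" and "\<forall>x. \<pi> $ x > 0"
    and "r \<ge> 1" and "s \<ge> 1"
  shows "op_norm_pi \<pi> (matpow (adjoint_pi \<pi> P - Pi_mat \<pi>) (r + s) ** matpow (P - Pi_mat \<pi>) (r + s))
    \<le> op_norm_pi \<pi> (matpow (adjoint_pi \<pi> P - Pi_mat \<pi>) r ** matpow (P - Pi_mat \<pi>) r)
     * op_norm_pi \<pi> (matpow (adjoint_pi \<pi> P - Pi_mat \<pi>) s ** matpow (P - Pi_mat \<pi>) s)"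
proof -
  interpret positive_weights \<pi>
    using assms(4) by unfold_locales blast
  define B where "B = P - Pi_mat \<pi>"
  let ?N = "\<lambda>n. op_norm_pi \<pi> (matpow B n)"
  have adj: "matpow (adjoint_pi \<pi> P - Pi_mat \<pi>) n = adjoint_pi \<pi> (matpow B n)" for n
    by (simp add: B_def adjoint_pi_matpow adjoint_pi_diff adjoint_pi_Pi_mat)
  have "(?N (r + s))^2 \<le> (?N r * ?N s)^2"
    by (intro power_mono op_norm_pi_matpow_add op_norm_pi_nonneg)
  then show ?thesis
    unfolding adj B_def[symmetric] op_norm_pi_adjoint_mult_self by (simp add: power_mult_distrib)
qed

end
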